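(* In the setting below, fix $m\ge2$, $p=1$ and the item parameters $\beta^*$, and let the number of users $n\to\infty$ with user parameters $\theta^*_1,\dots,\theta^*_n$ (possibly depending on $n$) such that $\gamma\ge\gamma_0$ for all $n$, for some constant $\gamma_0>0$ independent of $n$. Then the output $\beta$ of the spectral algorithm is a consistent estimator of $\beta^*$: for every $\epsilon>0$, $$\lim_{n\to\infty}\Pr\big(\|\beta-\beta^*\|_2<\epsilon\big)=1 .$$
   Context: Setting. Let $n\ge1$ (number of users) and $m\ge2$ (number of items). Fix user parameters $\theta^*_1,\dots,\theta^*_n\in\mathbb R$ and item parameters $\beta^*_1,\dots,\beta^*_m\in\mathbb R$ normalized so that $\sum_{i=1}^m\beta^*_i=0$. Write $w^*_i=e^{\beta^*_i}$, $\kappa=\max_i\beta^*_i-\min_i\beta^*_i$, and $\pi^*_i=w^*_i/\sum_{k=1}^m w^*_k$. Random sampling scheme: the assignment matrix $A\in\{0,1\}^{n\times m}$ has i.i.d. Bernoulli$(p)$ entries, $p\in(0,1]$; independently of $A$, the responses $X_{li}\in\{0,1\}$ ($l\in[n]$, $i\in[m]$) are independent with $\Pr(X_{li}=1)=e^{\theta^*_l}/(e^{\theta^*_l}+e^{\beta^*_i})$ (only responses with $A_{li}=1$ are used). Let $\gamma=\min_{l\in[n],\,i\ne j\in[m]}\mathbb E[X_{li}(1-X_{lj})]$. Let $B=A^\top A$ and $d=\frac32 mnp^2$. Define $m\times m$ matrices $P,P^*$ by, for $i\neq j$, $P_{ij}=\frac1d\sum_{l=1}^nA_{li}A_{lj}X_{li}(1-X_{lj})$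 and $P^*_{ij}=\frac1d\sum_{l=1}^nA_{li}A_{lj}\mathbb E[X_{li}(1-X_{lj})]$, and $P_{ii}=1-\sum_{k\ne i}P_{ik}$, $P^*_{ii}=1-\sum_{k\ne i}P^*_{ik}$. Spectral algorithm: compute a stationary distribution $\pi$ of $P$ (a probability vector with $\pi^\top P=\pi^\top$) and output $\beta\in\mathbb R^m$ with $\beta_i=\log\pi_i-\frac1m\sum_{k=1}^m\log\pi_k$. $\|\cdot\|_2$ denotes the Euclidean norm of vectors. *)

theory Defs
  imports "HOL-Probability.Probability"
begin

text \<open>Users are indexed by {..<n}, items by {..<m}.
  theta l = user parameter, beta i = item parameter.\<close>

definition resp_prob :: "(nat \<Rightarrow> real) \<Rightarrow> (nat \<Rightarrow> real) \<Rightarrow> nat \<Rightarrow> nat \<Rightarrow> real" where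
  "resp_prob theta beta l i = exp (theta l) / (exp (theta l) + exp (beta i))"

text \<open>gamma = min over users l and distinct items i, j of E[X_li (1 - X_lj)].\<close>
definition gamma_param :: "nat \<Rightarrow> nat \<Rightarrow> (nat \<Rightarrow> real) \<Rightarrow> (nat \<Rightarrow> real) \<Rightarrow> real" where
  "gamma_param n m theta beta =
     Min {resp_prob theta beta l i * (1 - resp_prob theta beta l j) | l i j.
            l < n \<and> i < m \<and> j < m \<and> i \<noteq> j}"

text \<open>Random sampling: assignment matrix A with iid Bernoulli(p) entries, and independent
  responses X with Pr(X_li = 1) = resp_prob; sampled jointly as a pair (A, X).\<close>
definition sample_pmf ::
  "nat \<Rightarrow> nat \<Rightarrow> real \<Rightarrow> (nat \<Rightarrow> real) \<Rightarrow> (nat \<Rightarrow> real)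
     \<Rightarrow> ((nat \<times> nat \<Rightarrow> bool) \<times> (nat \<times> nat \<Rightarrow> bool)) pmf" where
  "sample_pmf n m p theta beta =
     pair_pmf (Pi_pmf ({..<n} \<times> {..<m}) False (\<lambda>_. bernoulli_pmf p))
              (Pi_pmf ({..<n} \<times> {..<m}) False
                 (\<lambda>(l, i). bernoulli_pmf (resp_prob theta beta l i)))"

definition ind :: "bool \<Rightarrow> real" where
  "ind b = (if b then 1 else 0)"

definition P_offdiag :: "nat \<Rightarrow> nat \<Rightarrow> real \<Rightarrow> (nat \<times> nat \<Rightarrow> bool) \<Rightarrow> (nat \<times> nat \<Rightarrow> bool)
     \<Rightarrow> nat \<Rightarrow> nat \<Rightarrow> real" where
  "P_offdiag n m p A X i j =
     (\<Sum>l<n. ind (A (l, i)) * ind (A (l, j)) * ind (X (l, i)) * (1 - ind (X (l, j))))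
       / (3 / 2 * real m * real n * p ^ 2)"

definition P_mat :: "nat \<Rightarrow> nat \<Rightarrow> real \<Rightarrow> (nat \<times> nat \<Rightarrow> bool) \<Rightarrow> (nat \<times> nat \<Rightarrow> bool)
     \<Rightarrow> nat \<Rightarrow> nat \<Rightarrow> real" where
  "P_mat n m p A X i j =
     (if i = j then 1 - (\<Sum>k\<in>{..<m} - {i}. P_offdiag n m p A X i k)
      else P_offdiag n m p A X i j)"

definition stationary_dist :: "nat \<Rightarrow> (nat \<Rightarrow> nat \<Rightarrow> real) \<Rightarrow> (nat \<Rightarrow> real) \<Rightarrow> bool" where
  "stationary_dist m Q pv \<longleftrightarrow>
     (\<forall>i<m. pv i \<ge> 0) \<and> (\<Sum>i<m. pv i) = 1 \<and>
     (\<forall>j<m. (\<Sum>i<m. pv i * Q i j) = pv j)"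

definition spectral_beta :: "nat \<Rightarrow> (nat \<Rightarrow> real) \<Rightarrow> nat \<Rightarrow> real" where
  "spectral_beta m pv i = ln (pv i) - (\<Sum>k<m. ln (pv k)) / real m"

definition l2_dist :: "nat \<Rightarrow> (nat \<Rightarrow> real) \<Rightarrow> (nat \<Rightarrow> real) \<Rightarrow> real" where
  "l2_dist m x y = sqrt (\<Sum>i<m. (x i - y i)^2)"

end

theory Submission
  imports Defs "HOL-Real_Asymp.Real_Asymp"
begin

text \<open>With \<open>p = 1\<close> every user answers every item, so off the diagonal \<open>P\<close> is the matrix of
  pair counts \<open>N\<^sub>i\<^sub>j\<close> (users answering \<open>i\<close> positively and \<open>j\<close> negatively) divided by \<open>d\<close>.
  Their means \<open>E\<^sub>i\<^sub>j\<close> are reversible, \<open>w\<^sub>i E\<^sub>i\<^sub>j = w\<^sub>j E\<^sub>j\<^sub>i\<close> with \<open>w\<^sub>i = exp \<beta>\<^sub>i\<close>, and at least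
  \<open>n\<gamma>\<close>. By Hoeffding's inequality and a union bound, all \<open>|N\<^sub>i\<^sub>j - E\<^sub>i\<^sub>j| < \<delta>n\<close> with probability
  at least \<open>1 - 2m\<^sup>2 exp (-2\<delta>\<^sup>2n)\<close>. On this event, the balance equation of a stationary \<open>\<pi>\<close> at the
  item maximising \<open>\<pi>\<^sub>i / w\<^sub>i\<close> forces every ratio \<open>\<pi>\<^sub>i / w\<^sub>i\<close> to lie within a factor \<open>1 - O(\<delta>)\<close>
  of the maximum, so \<open>log \<pi>\<^sub>i - \<beta>\<^sub>i\<close> is constant up to \<open>O(\<delta>)\<close> and the centred logarithms
  recover \<open>\<beta>\<close> up to \<open>O(\<delta>)\<close>.\<close>

definition pair_count :: "nat \<Rightarrow> (nat \<times> nat \<Rightarrow> bool) \<Rightarrow> nat \<Rightarrow> nat \<Rightarrow> real" where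
  "pair_count n X i j = (\<Sum>l<n. ind (X (l, i)) * (1 - ind (X (l, j))))"

definition expected_pair_count :: "nat \<Rightarrow> (nat \<Rightarrow> nat \<Rightarrow> real) \<Rightarrow> nat \<Rightarrow> nat \<Rightarrow> real" where
  "expected_pair_count n q i j = (\<Sum>l<n. q l i * (1 - q l j))"

lemma prod_eq_two_factors:
  fixes h :: "'a \<Rightarrow> 'b::comm_monoid_mult"
  assumes "finite D" "a \<in> D" "b \<in> D" "a \<noteq> b"
    and "\<And>k. k \<in> D \<Longrightarrow> k \<noteq> a \<Longrightarrow> k \<noteq> b \<Longrightarrow> h k = 1"
  shows "(\<Prod>k\<in>D. h k) = h a * h b"
proof -
  have "(\<Prod>k\<in>D. h k) = h a * (h b * (\<Prod>k\<in>D - {a} - {b}. h k))"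
    using assms(1-4) by (simp add: prod.remove[of D a] prod.remove[of "D - {a}" b])
  also have "(\<Prod>k\<in>D - {a} - {b}. h k) = 1"
    using assms(5) by (intro prod.neutral) auto
  finally show ?thesis by simp
qed

lemma indep_vars_pair_indicators:
  fixes p :: "nat \<times> nat \<Rightarrow> bool pmf"
  assumes "i < m" "j < m" "i \<noteq> j"
  shows "prob_space.indep_vars (Pi_pmf ({..<n} \<times> {..<m}) False p) (\<lambda>_. borel)
           (\<lambda>l x. ind (x (l, i)) * (1 - ind (x (l, j)))) {..<n}"
proof -
  let ?M = "measure_pmf (Pi_pmf ({..<n} \<times> {..<m}) False p)"
  define K where "K l = {(l, i), (l, j)}" for l :: nat
  define Y where "Y l g = ind (g (l, i)) * (1 - ind (g (l, j)))" for l and g :: "nat \<times> nat \<Rightarrow> bool"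
  have "prob_space.indep_vars ?M (\<lambda>_. count_space UNIV) (\<lambda>k x. x k) ({..<n} \<times> {..<m})"
    by (rule indep_vars_Pi_pmf) simp
  then have "prob_space.indep_vars ?M (\<lambda>l. PiM (K l) (\<lambda>_. count_space UNIV))
               (\<lambda>l x. restrict x (K l)) {..<n}"
    by (rule prob_space.indep_vars_restrict[OF measure_pmf.prob_space_axioms])
       (auto simp: K_def assms disjoint_family_on_def)
  then have "prob_space.indep_vars ?M (\<lambda>_. borel) (\<lambda>l x. Y l (restrict x (K l))) {..<n}"
  proof (rule prob_space.indep_vars_compose2[OF measure_pmf.prob_space_axioms])
    fix l
    have "(\<lambda>g. g k) \<in> measurable (PiM (K l) (\<lambda>_. count_space UNIV)) (count_space UNIV)"
      if "k \<in> K l" for k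
      using that by (rule measurable_component_singleton)
    then show "Y l \<in> borel_measurable (PiM (K l) (\<lambda>_. count_space UNIV))"
      unfolding Y_def by (simp add: K_def)
  qed
  then show ?thesis
    by (rule prob_space.indep_vars_cong[OF measure_pmf.prob_space_axioms, THEN iffD1, rotated 3])
       (auto simp: Y_def K_def)
qed

lemma expectation_pair_indicator:
  fixes q :: "nat \<Rightarrow> nat \<Rightarrow> real"
  assumes "\<And>l i. 0 \<le> q l i" "\<And>l i. q l i \<le> 1"
    and "l < n" "i < m" "j < m" "i \<noteq> j"
  shows "measure_pmf.expectation (Pi_pmf ({..<n} \<times> {..<m}) False (\<lambda>(l, i). bernoulli_pmf (q l i)))
           (\<lambda>x. ind (x (l, i)) * (1 - ind (x (l, j)))) = q l i * (1 - q l j)"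
proof -
  define D where "D = {..<n} \<times> {..<m}"
  define f where "f k v = (if k = (l, i) then ind v else if k = (l, j) then 1 - ind v else 1)"
    for k and v :: bool
  have D: "finite D" "(l, i) \<in> D" "(l, j) \<in> D" "(l, i) \<noteq> (l, j)"
    using assms by (auto simp: D_def)
  have "measure_pmf.expectation (Pi_pmf D False (\<lambda>(l, i). bernoulli_pmf (q l i)))
          (\<lambda>x. ind (x (l, i)) * (1 - ind (x (l, j))))
      = measure_pmf.expectation (Pi_pmf D False (\<lambda>(l, i). bernoulli_pmf (q l i)))
          (\<lambda>x. \<Prod>k\<in>D. f k (x k))"
    by (intro Bochner_Integration.integral_cong refl, subst prod_eq_two_factors[OF D])
       (use assms(6) in \<open>auto simp: f_def\<close>)
  also have "\<dots> = (\<Prod>k\<in>D. measure_pmf.expectation ((\<lambda>(l, i). bernoulli_pmf (q l i)) k) (f k))"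
    by (rule expectation_prod_Pi_pmf[OF D(1)]) (auto simp: f_def ind_def integrable_measure_pmf_finite)
  also have "\<dots> = q l i * (1 - q l j)"
    by (subst prod_eq_two_factors[OF D]) (use assms(1,2,6) in \<open>auto simp: f_def ind_def split: if_splits\<close>)
  finally show ?thesis by (simp add: D_def)
qed

lemma prob_pair_count_deviation_le:
  fixes q :: "nat \<Rightarrow> nat \<Rightarrow> real"
  assumes "\<And>l i. 0 \<le> q l i" "\<And>l i. q l i \<le> 1"
    and "i < m" "j < m" "i \<noteq> j" "n \<ge> 1" "\<delta> \<ge> 0"
  shows "measure_pmf.prob (Pi_pmf ({..<n} \<times> {..<m}) False (\<lambda>(l, i). bernoulli_pmf (q l i)))
           {x. \<delta> * n \<le> \<bar>pair_count n x i j - expected_pair_count n q i j\<bar>}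
         \<le> 2 * exp (-2 * \<delta>\<^sup>2 * n)"
proof -
  define Q where "Q = Pi_pmf ({..<n} \<times> {..<m}) False (\<lambda>(l, i). bernoulli_pmf (q l i))"
  define Y where "Y l x = ind (x (l, i)) * (1 - ind (x (l, j)))" for l and x :: "nat \<times> nat \<Rightarrow> bool"
  have EY: "(\<Sum>l<n. measure_pmf.expectation Q (Y l)) = expected_pair_count n q i j"
    unfolding expected_pair_count_def Q_def Y_def
    by (intro sum.cong refl expectation_pair_indicator) (use assms in auto)
  interpret Hoeffding_ineq Q "{..<n}" Y "\<lambda>_. 0" "\<lambda>_. 1" "\<Sum>l<n. measure_pmf.expectation Q (Y l)"
    using indep_vars_pair_indicators[OF assms(3-5), of n "\<lambda>(l, i). bernoulli_pmf (q l i)"]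
    by unfold_locales (auto simp: Q_def Y_def[abs_def] ind_def)
  have "measure_pmf.prob Q {x\<in>space Q. \<bar>(\<Sum>l<n. Y l x) - (\<Sum>l<n. measure_pmf.expectation Q (Y l))\<bar> \<ge> \<delta> * n}
        \<le> 2 * exp (-2 * (\<delta> * n)\<^sup>2 / (\<Sum>l<n. (1 - 0)\<^sup>2))"
    by (rule Hoeffding_ineq_abs_ge) (use assms in auto)
  also note EY
  also have "-2 * (\<delta> * n)\<^sup>2 / (\<Sum>l<n. (1 - 0)\<^sup>2) = -2 * \<delta>\<^sup>2 * n"
    using assms(6) by (simp add: power2_eq_square)
  finally show ?thesis
    by (simp add: Q_def Y_def pair_count_def)
qed

lemma prob_pair_counts_close_ge:
  fixes q :: "nat \<Rightarrow> nat \<Rightarrow> real"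
  assumes "\<And>l i. 0 \<le> q l i" "\<And>l i. q l i \<le> 1" "n \<ge> 1" "\<delta> \<ge> 0"
  shows "1 - real m ^ 2 * (2 * exp (-2 * \<delta>\<^sup>2 * n))
         \<le> measure_pmf.prob (Pi_pmf ({..<n} \<times> {..<m}) False (\<lambda>(l, i). bernoulli_pmf (q l i)))
              {x. \<forall>i<m. \<forall>j<m. i \<noteq> j \<longrightarrow>
                    \<bar>pair_count n x i j - expected_pair_count n q i j\<bar> < \<delta> * n}"
    (is "_ \<le> measure_pmf.prob ?Q ?G")
proof -
  define bad where "bad = (\<lambda>(i, j). if i = j then {}
    else {x. \<delta> * n \<le> \<bar>pair_count n x i j - expected_pair_count n q i j\<bar>})"
  have "UNIV - ?G \<subseteq> (\<Union>ij\<in>{..<m} \<times> {..<m}. bad ij)"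
    by (force simp: bad_def not_less)
  then have "measure_pmf.prob ?Q (UNIV - ?G) \<le> measure_pmf.prob ?Q (\<Union>ij\<in>{..<m} \<times> {..<m}. bad ij)"
    by (intro measure_pmf.finite_measure_mono) auto
  also have "\<dots> \<le> (\<Sum>ij\<in>{..<m} \<times> {..<m}. measure_pmf.prob ?Q (bad ij))"
    by (intro measure_pmf.finite_measure_subadditive_finite) auto
  also have "\<dots> \<le> (\<Sum>ij\<in>{..<m} \<times> {..<m}. 2 * exp (-2 * \<delta>\<^sup>2 * n))"
    by (intro sum_mono)
       (use prob_pair_count_deviation_le[OF assms(1,2) _ _ _ assms(3,4)] in \<open>auto simp: bad_def\<close>)
  finally show ?thesis
    using measure_pmf.prob_compl[of ?G ?Q] by (simp add: power2_eq_square)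
qed

lemma bernoulli_pmf_1: "bernoulli_pmf 1 = return_pmf True"
  by (rule pmf_eqI) (simp add: pmf_bernoulli_True pmf_bernoulli_False split: split_indicator)

lemma sample_pmf_1:
  "sample_pmf n m 1 theta beta =
     map_pmf (Pair (\<lambda>x. x \<in> {..<n} \<times> {..<m}))
       (Pi_pmf ({..<n} \<times> {..<m}) False (\<lambda>(l, i). bernoulli_pmf (resp_prob theta beta l i)))"
proof -
  have "Pi_pmf ({..<n} \<times> {..<m}) False (\<lambda>_. bernoulli_pmf 1) = return_pmf (\<lambda>x. x \<in> {..<n} \<times> {..<m})"
    by (simp add: bernoulli_pmf_1 Pi_pmf_return_pmf)
  then show ?thesis
    unfolding sample_pmf_def by (simp add: pair_return_pmf1)
qed

lemma P_offdiag_full_assignment: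
  assumes "i < m" "j < m"
  shows "P_offdiag n m 1 (\<lambda>x. x \<in> {..<n} \<times> {..<m}) X i j
         = pair_count n X i j / (3 / 2 * real m * real n)"
  unfolding P_offdiag_def pair_count_def using assms
  by (auto simp: ind_def intro!: sum.cong arg_cong2[where f = "(/)"])

lemma stationary_dist_flux_balance:
  assumes "stationary_dist m Q pv" "j < m"
    and "\<And>i. i < m \<Longrightarrow> Q i j = (if i = j then 1 - (\<Sum>k\<in>{..<m} - {i}. F i k) else F i j)"
  shows "(\<Sum>i\<in>{..<m} - {j}. pv i * F i j) = pv j * (\<Sum>k\<in>{..<m} - {j}. F j k)"
proof -
  have "pv j = (\<Sum>i<m. pv i * Q i j)"
    using assms(1,2) by (simp add: stationary_dist_def)
  also have "\<dots> = pv j * Q j j + (\<Sum>i\<in>{..<m} - {j}. pv i * Q i j)"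
    using assms(2) by (subst sum.remove[of _ j]) auto
  also have "\<dots> = pv j * (1 - (\<Sum>k\<in>{..<m} - {j}. F j k)) + (\<Sum>i\<in>{..<m} - {j}. pv i * F i j)"
    using assms(2,3) by (auto intro!: sum.cong)
  finally show ?thesis by (simp add: algebra_simps)
qed

lemma flux_imbalance_le:
  fixes w pv :: "nat \<Rightarrow> real" and E N :: "nat \<Rightarrow> nat \<Rightarrow> real"
  assumes "j < m" "d \<ge> 0"
    and wpos: "\<And>i. i < m \<Longrightarrow> w i > 0"
    and rev: "\<And>i. i < m \<Longrightarrow> w i * E i j = w j * E j i"
    and close: "\<And>i. i < m \<Longrightarrow> i \<noteq> j \<Longrightarrow> \<bar>N i j - E i j\<bar> \<le> d \<and> \<bar>N j i - E j i\<bar> \<le> d"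
    and bal: "(\<Sum>i\<in>{..<m} - {j}. pv i * N i j) = pv j * (\<Sum>k\<in>{..<m} - {j}. N j k)"
    and pv0: "\<And>i. i < m \<Longrightarrow> pv i \<ge> 0" and pv1: "(\<Sum>i<m. pv i) = 1"
  shows "(\<Sum>i\<in>{..<m} - {j}. w i * E i j * (pv j / w j - pv i / w i)) \<le> real m * d"
proof -
  define S where "S = {..<m} - {j}"
  have pvj: "pv j \<le> 1"
    using member_le_sum[of j "{..<m}" pv] assms(1) pv0 pv1 by auto
  \<comment> \<open>By reversibility each summand is a net flow \<open>pv j * E j i - pv i * E i j\<close>; the balance
    equation for \<open>N\<close> cancels the corresponding flows of \<open>N\<close>, leaving only deviations \<open>N - E\<close>.\<close>
  have "(\<Sum>i\<in>S. w i * E i j * (pv j / w j - pv i / w i))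
        = (\<Sum>i\<in>S. pv j * (E j i - N j i)) + (\<Sum>i\<in>S. pv i * (N i j - E i j))"
  proof -
    have "w i * E i j * (pv j / w j - pv i / w i) = pv j * E j i - pv i * E i j" if "i \<in> S" for i
      using that wpos[of i] wpos[OF assms(1)] rev[of i] by (auto simp: S_def field_simps)
    then have "(\<Sum>i\<in>S. w i * E i j * (pv j / w j - pv i / w i))
               = pv j * (\<Sum>i\<in>S. E j i) - (\<Sum>i\<in>S. pv i * E i j)"
      by (simp add: sum_subtractf sum_distrib_left)
    then show ?thesis
      using bal by (simp add: S_def sum_subtractf sum_distrib_left algebra_simps)
  qed
  also have "\<dots> \<le> (\<Sum>i\<in>S. d) + (\<Sum>i\<in>S. pv i * d)"
  proof (intro add_mono sum_mono)
    fix i assume i: "i \<in> S"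
    then have bounds: "\<bar>N i j - E i j\<bar> \<le> d" "\<bar>N j i - E j i\<bar> \<le> d"
      using close by (auto simp: S_def)
    have "pv j * (E j i - N j i) \<le> pv j * d"
      using bounds pv0[OF assms(1)] by (intro mult_left_mono) auto
    also have "\<dots> \<le> d"
      using mult_right_mono[OF pvj assms(2)] by simp
    finally show "pv j * (E j i - N j i) \<le> d" .
    show "pv i * (N i j - E i j) \<le> pv i * d"
      using bounds i pv0 by (intro mult_left_mono) (auto simp: S_def)
  qed
  also have "(\<Sum>i\<in>S. pv i * d) \<le> (\<Sum>i<m. pv i * d)"
    by (rule sum_mono2) (use pv0 assms(2) in \<open>auto simp: S_def\<close>)
  also have "(\<Sum>i<m. pv i * d) = d"
    using pv1 by (simp add: sum_distrib_right[symmetric])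
  also have "(\<Sum>i\<in>S. d) = real (m - 1) * d"
    using assms(1) by (simp add: S_def)
  finally show ?thesis
    using assms(1,2) by (simp add: S_def of_nat_diff algebra_simps)
qed

lemma stationary_ratio_spread_le:
  fixes w pv :: "nat \<Rightarrow> real" and E N :: "nat \<Rightarrow> nat \<Rightarrow> real"
  assumes "m \<ge> 1" "d \<ge> 0" "c > 0" "wmin > 0"
    and w: "\<And>i. i < m \<Longrightarrow> wmin \<le> w i \<and> w i \<le> W"
    and rev: "\<And>i j. i < m \<Longrightarrow> j < m \<Longrightarrow> w i * E i j = w j * E j i"
    and Elow: "\<And>i j. i < m \<Longrightarrow> j < m \<Longrightarrow> i \<noteq> j \<Longrightarrow> c \<le> E i j"
    and close: "\<And>i j. i < m \<Longrightarrow> j < m \<Longrightarrow> i \<noteq> j \<Longrightarrow> \<bar>N i j - E i j\<bar> \<le> d"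
    and bal: "\<And>j. j < m \<Longrightarrow>
      (\<Sum>i\<in>{..<m} - {j}. pv i * N i j) = pv j * (\<Sum>k\<in>{..<m} - {j}. N j k)"
    and pv0: "\<And>i. i < m \<Longrightarrow> pv i \<ge> 0" and pv1: "(\<Sum>i<m. pv i) = 1"
  obtains M where "M > 0" "\<And>i. i < m \<Longrightarrow> pv i / w i \<le> M"
    "\<And>i. i < m \<Longrightarrow> (1 - real m ^ 2 * W * d / (wmin * c)) * M \<le> pv i / w i"
proof -
  define r where "r i = pv i / w i" for i
  define M where "M = Max (r ` {..<m})"
  have nonempty: "{..<m} \<noteq> {}"
    using assms(1) by (simp add: lessThan_empty_iff)
  have "M \<in> r ` {..<m}"
    unfolding M_def using nonempty by (intro Max_in) auto
  then obtain j where j: "j < m" "r j = M"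
    by blast
  have rM: "r i \<le> M" if "i < m" for i
    unfolding M_def using that by (intro Max_ge) auto
  have wpos: "w i > 0" if "i < m" for i
    using w[OF that] assms(4) by linarith
  \<comment> \<open>At the maximiser \<open>j\<close> all summands of \<open>flux_imbalance_le\<close> are nonnegative.\<close>
  have gap: "wmin * c * (M - r i) \<le> real m * d" if i: "i < m" "i \<noteq> j" for i
  proof -
    have nonneg: "0 \<le> w k * E k j * (M - r k)" if "k \<in> {..<m} - {j}" for k
      using that wpos[of k] Elow[of k j] assms(3) j(1) rM[of k] by auto
    have "wmin * c * (M - r i) \<le> w i * E i j * (M - r i)"
      using w[OF i(1)] Elow[OF i(1) j(1) i(2)] assms(3,4) rM[OF i(1)]
      by (intro mult_right_mono mult_mono) auto
    also have "\<dots> \<le> (\<Sum>k\<in>{..<m} - {j}. w k * E k j * (M - r k))"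
      by (rule member_le_sum) (use i nonneg in auto)
    also have "\<dots> \<le> real m * d"
      using flux_imbalance_le[of j m d w E N pv] j assms(2) wpos rev close bal pv0 pv1
      by (simp add: r_def)
    finally show ?thesis .
  qed
  have "Max (pv ` {..<m}) \<in> pv ` {..<m}"
    using nonempty by (intro Max_in) auto
  then obtain k where k: "k < m" "pv k = Max (pv ` {..<m})"
    by auto
  have "1 \<le> real m * pv k"
    using sum_bounded_above[of "{..<m}" pv "Max (pv ` {..<m})"] pv1 k by simp
  also have "\<dots> \<le> real m * (M * W)"
  proof (rule mult_left_mono)
    have "0 \<le> r k"
      using pv0[OF k(1)] wpos[OF k(1)] by (simp add: r_def)
    then have "r k * w k \<le> M * W"
      using rM[OF k(1)] w[OF k(1)] wpos[OF k(1)] by (intro mult_mono) auto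
    then show "pv k \<le> M * W"
      using wpos[OF k(1)] by (simp add: r_def)
  qed simp
  finally have Mlow: "1 \<le> real m * W * M"
    by (simp add: ac_simps)
  have "M > 0"
  proof (rule ccontr)
    assume "\<not> M > 0"
    then have "real m * W * M \<le> 0"
      using w[OF j(1)] assms(4) by (intro mult_nonneg_nonpos) auto
    then show False
      using Mlow by linarith
  qed
  moreover have "(1 - real m ^ 2 * W * d / (wmin * c)) * M \<le> r i" if i: "i < m" for i
  proof (cases "i = j")
    case True
    have "0 \<le> real m ^ 2 * W * d / (wmin * c) * M"
      using \<open>M > 0\<close> w[OF j(1)] assms(2-4) by simp
    then show ?thesis
      using True j by (simp add: algebra_simps)
  next
    case False
    have "M - r i \<le> real m * d / (wmin * c)"
      using gap[OF i False] assms(3,4) by (simp add: field_simps)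
    also have "\<dots> \<le> real m * W * M * (real m * d / (wmin * c))"
      using mult_right_mono[OF Mlow, of "real m * d / (wmin * c)"] assms(2-4) by simp
    finally show ?thesis
      by (simp add: power2_eq_square algebra_simps)
  qed
  ultimately show ?thesis
    using that rM by (auto simp: r_def)
qed

lemma l2_dist_spectral_beta_le:
  fixes pv b :: "nat \<Rightarrow> real"
  assumes "(\<Sum>i<m. b i) = 0"
    and "\<And>i. i < m \<Longrightarrow> a \<le> ln (pv i) - b i \<and> ln (pv i) - b i \<le> a + h"
  shows "l2_dist m (spectral_beta m pv) b \<le> sqrt (real m) * h"
proof (cases "m = 0")
  case True
  then show ?thesis by (simp add: l2_dist_def)
next
  case False
  define t where "t i = ln (pv i) - b i" for i
  define mean where "mean = (\<Sum>k<m. t k) / real m"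
  have "real m * a \<le> (\<Sum>k<m. t k)" "(\<Sum>k<m. t k) \<le> real m * (a + h)"
    using sum_mono[of "{..<m}" "\<lambda>_. a" t] sum_mono[of "{..<m}" t "\<lambda>_. a + h"] assms(2)
    by (auto simp: t_def)
  then have mean: "a \<le> mean" "mean \<le> a + h"
    using False by (auto simp: mean_def field_simps)
  have "spectral_beta m pv i - b i = t i - mean" for i
    using assms(1) by (simp add: spectral_beta_def mean_def t_def sum_subtractf)
  then have "\<bar>spectral_beta m pv i - b i\<bar> \<le> \<bar>h\<bar>" if "i < m" for i
    using assms(2)[OF that] mean by (simp add: t_def abs_le_iff)
  then have "(\<Sum>i<m. (spectral_beta m pv i - b i)\<^sup>2) \<le> (\<Sum>i<m. h\<^sup>2)"
    by (intro sum_mono) (simp add: abs_le_square_iff)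
  then have "l2_dist m (spectral_beta m pv) b \<le> sqrt (real m * h\<^sup>2)"
    unfolding l2_dist_def by simp
  also have "\<dots> = sqrt (real m) * h"
    using mean by (simp add: real_sqrt_mult)
  finally show ?thesis .
qed

lemma l2_dist_spectral_beta_le_of_ratio:
  fixes pv b :: "nat \<Rightarrow> real"
  assumes "(\<Sum>i<m. b i) = 0" "M > 0" "0 \<le> \<eta>" "\<eta> \<le> 1 / 2"
    and "\<And>i. i < m \<Longrightarrow> (1 - \<eta>) * M \<le> pv i / exp (b i) \<and> pv i / exp (b i) \<le> M"
  shows "l2_dist m (spectral_beta m pv) b \<le> sqrt (real m) * (2 * \<eta>)"
proof (rule l2_dist_spectral_beta_le[OF assms(1)])
  fix i assume i: "i < m"
  have pos: "0 < (1 - \<eta>) * M"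
    using assms(2,4) by simp
  have "0 < pv i / exp (b i)"
    using pos assms(5)[OF i] by linarith
  then have ln_ratio: "ln (pv i / exp (b i)) = ln (pv i) - b i"
    by (simp add: ln_div zero_less_divide_iff)
  have "ln M - 2 * \<eta> \<le> ln ((1 - \<eta>) * M)"
    using ln_one_minus_pos_lower_bound[of \<eta>] mult_right_mono[OF assms(4,3)] assms(2-4)
    by (simp add: ln_mult power2_eq_square)
  also have "\<dots> \<le> ln (pv i) - b i"
    using pos assms(5)[OF i] by (simp flip: ln_ratio)
  finally show "ln M - 2 * \<eta> \<le> ln (pv i) - b i \<and> ln (pv i) - b i \<le> ln M - 2 * \<eta> + 2 * \<eta>"
    using pos assms(5)[OF i] by (simp flip: ln_ratio)
qed

lemma resp_prob_nonneg: "0 \<le> resp_prob theta beta l i"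
  and resp_prob_le_1: "resp_prob theta beta l i \<le> 1"
  unfolding resp_prob_def by (auto simp: divide_le_eq add_pos_pos)

lemma resp_prob_reversible:
  "exp (beta i) * (resp_prob theta beta l i * (1 - resp_prob theta beta l j))
   = exp (beta j) * (resp_prob theta beta l j * (1 - resp_prob theta beta l i))"
proof -
  have "exp (theta l) + exp (beta k) \<noteq> 0" for k
    by (metis add_pos_pos exp_gt_zero less_irrefl)
  then show ?thesis
    unfolding resp_prob_def by (simp add: field_simps)
qed

lemma expected_pair_count_reversible:
  "exp (beta i) * expected_pair_count n (resp_prob theta beta) i j
   = exp (beta j) * expected_pair_count n (resp_prob theta beta) j i"
  unfolding expected_pair_count_def sum_distrib_left by (simp add: resp_prob_reversible)

lemma gamma_param_le:
  assumes "l < n" "i < m" "j < m" "i \<noteq> j"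
  shows "gamma_param n m theta beta \<le> resp_prob theta beta l i * (1 - resp_prob theta beta l j)"
proof -
  let ?g = "\<lambda>(l, i, j). resp_prob theta beta l i * (1 - resp_prob theta beta l j)"
  have "{resp_prob theta beta l i * (1 - resp_prob theta beta l j) | l i j.
          l < n \<and> i < m \<and> j < m \<and> i \<noteq> j} \<subseteq> ?g ` ({..<n} \<times> {..<m} \<times> {..<m})"
    by force
  then have "finite {resp_prob theta beta l i * (1 - resp_prob theta beta l j) | l i j.
               l < n \<and> i < m \<and> j < m \<and> i \<noteq> j}"
    by (rule finite_subset) simp
  then show ?thesis
    unfolding gamma_param_def using assms by (intro Min_le) auto
qed

lemma expected_pair_count_ge:
  assumes "gamma0 \<le> gamma_param n m theta beta" "i < m" "j < m" "i \<noteq> j"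
  shows "real n * gamma0 \<le> expected_pair_count n (resp_prob theta beta) i j"
proof -
  have "(\<Sum>l<n. gamma0) \<le> expected_pair_count n (resp_prob theta beta) i j"
    unfolding expected_pair_count_def
  proof (rule sum_mono)
    fix l assume "l \<in> {..<n}"
    show "gamma0 \<le> resp_prob theta beta l i * (1 - resp_prob theta beta l j)"
      by (rule order_trans[OF assms(1) gamma_param_le[OF _ assms(2-4)]]) (use \<open>l \<in> {..<n}\<close> in simp)
  qed
  then show ?thesis by simp
qed

lemma spectral_beta_accurate_if_pair_counts_close:
  assumes "m \<ge> 1" "(\<Sum>i<m. beta i) = 0" "n \<ge> 1"
    and "gamma0 > 0" "gamma0 \<le> gamma_param n m theta beta"
    and "wmin > 0" "\<And>i. i < m \<Longrightarrow> wmin \<le> exp (beta i) \<and> exp (beta i) \<le> W"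
    and "0 \<le> \<eta>" "\<eta> \<le> 1 / 2"
    and close: "\<And>i j. i < m \<Longrightarrow> j < m \<Longrightarrow> i \<noteq> j \<Longrightarrow>
      \<bar>pair_count n X i j - expected_pair_count n (resp_prob theta beta) i j\<bar>
        \<le> \<eta> * wmin * gamma0 / (real m ^ 2 * W) * n"
    and st: "stationary_dist m (P_mat n m 1 (\<lambda>x. x \<in> {..<n} \<times> {..<m}) X) pv"
  shows "l2_dist m (spectral_beta m pv) beta \<le> sqrt (real m) * (2 * \<eta>)"
proof -
  define D where "D = 3 / 2 * real m * real n"
  define d where "d = \<eta> * wmin * gamma0 / (real m ^ 2 * W) * n"
  have "D > 0" "W > 0"
    using assms(1,3,6) assms(7)[of 0] by (auto simp: D_def)
  have bal: "(\<Sum>i\<in>{..<m} - {j}. pv i * pair_count n X i j)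
             = pv j * (\<Sum>k\<in>{..<m} - {j}. pair_count n X j k)" if j: "j < m" for j
  proof -
    have "(\<Sum>i\<in>{..<m} - {j}. pv i * P_offdiag n m 1 (\<lambda>x. x \<in> {..<n} \<times> {..<m}) X i j)
          = pv j * (\<Sum>k\<in>{..<m} - {j}. P_offdiag n m 1 (\<lambda>x. x \<in> {..<n} \<times> {..<m}) X j k)"
      by (rule stationary_dist_flux_balance[OF st j]) (simp add: P_mat_def)
    then have "(\<Sum>i\<in>{..<m} - {j}. pv i * pair_count n X i j) / D
               = pv j * (\<Sum>k\<in>{..<m} - {j}. pair_count n X j k) / D"
      using j by (simp add: P_offdiag_full_assignment[where n = n and m = m, folded D_def]
          sum_divide_distrib[symmetric])
    then show ?thesis
      using \<open>D > 0\<close> by simp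
  qed
  obtain M where M: "M > 0" "\<And>i. i < m \<Longrightarrow> pv i / exp (beta i) \<le> M"
    "\<And>i. i < m \<Longrightarrow> (1 - real m ^ 2 * W * d / (wmin * (real n * gamma0))) * M \<le> pv i / exp (beta i)"
  proof (rule stationary_ratio_spread_le[of m d "real n * gamma0" wmin "\<lambda>i. exp (beta i)" W
      "expected_pair_count n (resp_prob theta beta)" "pair_count n X" pv])
    show "0 \<le> d"
      using assms(4,6,8) \<open>W > 0\<close> by (simp add: d_def)
    show "\<And>i j. i < m \<Longrightarrow> j < m \<Longrightarrow> i \<noteq> j \<Longrightarrow>
            real n * gamma0 \<le> expected_pair_count n (resp_prob theta beta) i j"
      by (rule expected_pair_count_ge[OF assms(5)])
  qed (use assms(1,3,4,6,7) close bal st expected_pair_count_reversible in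
        \<open>auto simp: d_def stationary_dist_def\<close>)
  have "real m ^ 2 * W * d / (wmin * (real n * gamma0)) = \<eta>"
    using assms(1,3,4,6) \<open>W > 0\<close> by (simp add: d_def field_simps)
  then show ?thesis
    using l2_dist_spectral_beta_le_of_ratio[OF assms(2) M(1) assms(8,9)] M(2,3) by simp
qed

lemma spectral_beta_success_prob_ge:
  assumes "m \<ge> 1" "(\<Sum>i<m. beta i) = 0" "gamma0 > 0" "\<epsilon> > 0"
  obtains \<delta> :: real where "\<delta> > 0"
    "\<And>n theta. n \<ge> 1 \<Longrightarrow> gamma0 \<le> gamma_param n m theta beta \<Longrightarrow>
       1 - real m ^ 2 * (2 * exp (-2 * \<delta>\<^sup>2 * n))
       \<le> measure_pmf.prob (sample_pmf n m 1 theta beta)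
            {(A, X). \<forall>pv. stationary_dist m (P_mat n m 1 A X) pv \<longrightarrow>
                       l2_dist m (spectral_beta m pv) beta < \<epsilon>}"
proof -
  define wmin where "wmin = Min ((\<lambda>i. exp (beta i)) ` {..<m})"
  define W where "W = Max ((\<lambda>i. exp (beta i)) ` {..<m})"
  define \<eta> where "\<eta> = min (1 / 2) (\<epsilon> / (4 * sqrt (real m)))"
  define \<delta> where "\<delta> = \<eta> * wmin * gamma0 / (real m ^ 2 * W)"
  have nonempty: "{..<m} \<noteq> {}"
    using assms(1) by (simp add: lessThan_empty_iff)
  have w: "wmin \<le> exp (beta i) \<and> exp (beta i) \<le> W" if "i < m" for i
    unfolding wmin_def W_def using that by (auto intro: Min_le Max_ge)
  have "wmin > 0"
    unfolding wmin_def using nonempty by (subst Min_gr_iff) auto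
  moreover have "W > 0"
    using w[of 0] \<open>wmin > 0\<close> assms(1) by force
  moreover have "\<eta> > 0" "\<eta> \<le> 1 / 2"
    using assms(1,4) by (auto simp: \<eta>_def)
  ultimately have "\<delta> > 0"
    using assms(1,3) by (simp add: \<delta>_def)
  have accurate: "sqrt (real m) * (2 * \<eta>) < \<epsilon>"
  proof -
    have "sqrt (real m) * (2 * \<eta>) \<le> sqrt (real m) * (2 * (\<epsilon> / (4 * sqrt (real m))))"
      by (intro mult_left_mono) (auto simp: \<eta>_def)
    also have "\<dots> = \<epsilon> / 2"
      using assms(1) by (simp add: field_simps)
    finally show ?thesis
      using assms(4) by linarith
  qed
  show ?thesis
  proof (rule that[OF \<open>\<delta> > 0\<close>])
    fix n :: nat and theta :: "nat \<Rightarrow> real"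
    assume n: "n \<ge> 1" and gamma: "gamma0 \<le> gamma_param n m theta beta"
    let ?Q = "Pi_pmf ({..<n} \<times> {..<m}) False (\<lambda>(l, i). bernoulli_pmf (resp_prob theta beta l i))"
    let ?good = "{X. \<forall>i<m. \<forall>j<m. i \<noteq> j \<longrightarrow>
      \<bar>pair_count n X i j - expected_pair_count n (resp_prob theta beta) i j\<bar> < \<delta> * n}"
    let ?T = "{(A, X). \<forall>pv. stationary_dist m (P_mat n m 1 A X) pv \<longrightarrow>
                       l2_dist m (spectral_beta m pv) beta < \<epsilon>}"
    have "l2_dist m (spectral_beta m pv) beta < \<epsilon>"
      if "X \<in> ?good" "stationary_dist m (P_mat n m 1 (\<lambda>x. x \<in> {..<n} \<times> {..<m}) X) pv" for X pv
    proof -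
      have "l2_dist m (spectral_beta m pv) beta \<le> sqrt (real m) * (2 * \<eta>)"
        using spectral_beta_accurate_if_pair_counts_close[of m beta n gamma0 theta wmin W \<eta> X pv]
          that assms(1-3) n gamma \<open>wmin > 0\<close> w \<open>\<eta> > 0\<close> \<open>\<eta> \<le> 1 / 2\<close>
        by (force simp: \<delta>_def)
      then show ?thesis
        using accurate by linarith
    qed
    then have "?good \<subseteq> Pair (\<lambda>x. x \<in> {..<n} \<times> {..<m}) -` ?T"
      by blast
    then have "measure_pmf.prob ?Q ?good \<le> measure_pmf.prob (sample_pmf n m 1 theta beta) ?T"
      by (simp add: sample_pmf_1 measure_pmf.finite_measure_mono)
    moreover have "1 - real m ^ 2 * (2 * exp (-2 * \<delta>\<^sup>2 * n)) \<le> measure_pmf.prob ?Q ?good"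
      using \<open>\<delta> > 0\<close> n by (intro prob_pair_counts_close_ge resp_prob_nonneg resp_prob_le_1) auto
    ultimately show "1 - real m ^ 2 * (2 * exp (-2 * \<delta>\<^sup>2 * n))
                     \<le> measure_pmf.prob (sample_pmf n m 1 theta beta) ?T"
      by linarith
  qed
qed

theorem mainTheorem3:
  fixes m :: nat and beta_star :: "nat \<Rightarrow> real"
    and theta_star :: "nat \<Rightarrow> nat \<Rightarrow> real" and gamma0 :: real and \<epsilon> :: real
  assumes "m \<ge> 2"
    and "(\<Sum>i<m. beta_star i) = 0"
    and "gamma0 > 0"
    and "\<And>n. n \<ge> 1 \<Longrightarrow> gamma_param n m (theta_star n) beta_star \<ge> gamma0"
    and "\<epsilon> > 0"
  shows "(\<lambda>n. measure_pmf.prob (sample_pmf n m 1 (theta_star n) beta_star)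
            {(A, X). \<forall>pv. stationary_dist m (P_mat n m 1 A X) pv \<longrightarrow>
                       l2_dist m (spectral_beta m pv) beta_star < \<epsilon>})
         \<longlonglongrightarrow> 1"
proof -
  obtain \<delta> :: real where "\<delta> > 0" and success:
    "\<And>n theta. n \<ge> 1 \<Longrightarrow> gamma0 \<le> gamma_param n m theta beta_star \<Longrightarrow>
       1 - real m ^ 2 * (2 * exp (-2 * \<delta>\<^sup>2 * n))
       \<le> measure_pmf.prob (sample_pmf n m 1 theta beta_star)
            {(A, X). \<forall>pv. stationary_dist m (P_mat n m 1 A X) pv \<longrightarrow>
                       l2_dist m (spectral_beta m pv) beta_star < \<epsilon>}"
    using spectral_beta_success_prob_ge[of m beta_star gamma0 \<epsilon>] assms(1,2,3,5) by auto
  have lower: "(\<lambda>n. 1 - real m ^ 2 * (2 * exp (-2 * \<delta>\<^sup>2 * real n))) \<longlonglongrightarrow> 1"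
    using \<open>\<delta> > 0\<close> by real_asymp
  show ?thesis
  proof (rule tendsto_sandwich[OF _ _ lower tendsto_const])
    show "\<forall>\<^sub>F n in sequentially. 1 - real m ^ 2 * (2 * exp (-2 * \<delta>\<^sup>2 * real n))
            \<le> measure_pmf.prob (sample_pmf n m 1 (theta_star n) beta_star)
                {(A, X). \<forall>pv. stationary_dist m (P_mat n m 1 A X) pv \<longrightarrow>
                           l2_dist m (spectral_beta m pv) beta_star < \<epsilon>}"
      using eventually_ge_at_top[of 1] by eventually_elim (intro success assms(4))
  qed (simp_all add: measure_pmf.prob_le_1)
qed

end
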